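(* For every real $D>1$ there exist $\alpha,\beta\in(0,\infty]$ with $\alpha\ne\beta$, and finite order SISO deterministic programs $C_1$ and $C_2$ with uniformly distributed secret input, such that $$\lim_{N\to\infty}\frac{IL_\alpha(C_1,N)}{IL_\alpha(C_2,N)}>D\quad\text{and}\quad\lim_{N\to\infty}\frac{IL_\beta(C_1,N)}{IL_\beta(C_2,N)}<\frac1D.$$ In particular, both limits exist.
   Context: A SISO deterministic program $C$ is a family indexed by $N\in\mathbb{N}^+$: for each $N$, a random variable $A$ uniformly distributed on $\mathcal{A}_N=\{0,1,\dots,N-1\}$, and a surjective map $F_N$ from $\mathcal{A}_N$ onto a finite set $\mathcal{O}_N$. The output is $O=F_N(A)$, and $\mathbf{p}_N$ denotes its distribution vector, so $\mathbf{p}_N(o)=|F_N^{-1}(o)|/N$. $C$ is of finite order if $\sup_N\|\mathbf{p}_N\|_0<\infty$, where $\|\mathbf{p}\|_0$ is the number of nonzero entries of $\mathbf{p}$. For a probability vector $\mathbf{p}$ and $\alpha\in(0,\infty]$, the Rényi entropy is $H_\alpha(\mathbf{p})=\frac{1}{1-\alpha}\log\sum_i p_i^\alpha$ for $\alpha\notin\{1,\infty\}$. The limiting cases are $H_1(\mathbf{p})=-\sum_i p_i\log p_i$ and $H_\infty(\mathbf{p})=-\log\max_i p_i$. The $\alpha$-information leakage is $IL_\alpha(C,N)=H_\alpha(\mathbf{p}_N)$. Both programs are evaluated at the same $N$. *)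

theory Defs
  imports Complex_Main "HOL-Library.Extended_Real"
begin

text \<open>A SISO deterministic program is modelled as a family F :: nat => nat => nat:
  for each N, the map F N restricted to A_N = {0..<N} is the program; its output set
  O_N is the image F N ` {..<N}, so F N is surjective onto O_N by construction.
  Outputs are encoded as natural numbers (any finite output set can be so encoded).\<close>

definition prog_outputs :: "(nat \<Rightarrow> nat \<Rightarrow> nat) \<Rightarrow> nat \<Rightarrow> nat set" where
  "prog_outputs F N = F N ` {..<N}"

definition prog_dist :: "(nat \<Rightarrow> nat \<Rightarrow> nat) \<Rightarrow> nat \<Rightarrow> nat \<Rightarrow> real" where
  "prog_dist F N y = real (card {a \<in> {..<N}. F N a = y}) / real N"

definition dist_support_size :: "(nat \<Rightarrow> nat \<Rightarrow> nat) \<Rightarrow> nat \<Rightarrow> nat" where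
  "dist_support_size F N = card {y. prog_dist F N y \<noteq> 0}"

definition finite_order :: "(nat \<Rightarrow> nat \<Rightarrow> nat) \<Rightarrow> bool" where
  "finite_order F \<longleftrightarrow> (\<exists>B::nat. \<forall>N>0. dist_support_size F N \<le> B)"

definition renyi_entropy :: "ereal \<Rightarrow> nat set \<Rightarrow> (nat \<Rightarrow> real) \<Rightarrow> real" where
  "renyi_entropy \<alpha> S p =
     (if \<alpha> = 1 then - (\<Sum>i\<in>S. p i * ln (p i))
      else if \<alpha> = \<infinity> then - ln (Max (p ` S))
      else (1 / (1 - real_of_ereal \<alpha>)) * ln (\<Sum>i\<in>S. p i powr real_of_ereal \<alpha>))"

definition info_leak :: "ereal \<Rightarrow> (nat \<Rightarrow> nat \<Rightarrow> nat) \<Rightarrow> nat \<Rightarrow> real" where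
  "info_leak \<alpha> F N = renyi_entropy \<alpha> (prog_outputs F N) (prog_dist F N)"

end

theory Submission
  imports Defs
begin

text \<open>Both programs cut the secret range into \<open>M\<close> blocks of size \<open>N div L\<close> plus a remainder and
  reveal the block (label \<open>0\<close> for the remainder); as \<open>N \<rightarrow> \<infinity>\<close> the output distribution tends to
  one atom of mass \<open>1 - M/L\<close> and \<open>M\<close> atoms of mass \<open>1/L\<close>. For \<open>M = 1, L = 2\<close> both \<open>H\<^sub>\<infinity>\<close> and
  \<open>H\<^sub>1\<^sub>/\<^sub>2\<close> tend to \<open>ln 2\<close>. For \<open>M = n c, L = n\<^sup>2 c\<close> the heavy atom has mass \<open>1 - 1/n\<close>, so
  \<open>H\<^sub>\<infinity> \<le> 1/(n - 1)\<close> is small, while the \<open>n c\<close> light atoms give \<open>H\<^sub>1\<^sub>/\<^sub>2 \<ge> ln c\<close>, which is large.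
  Taking \<open>n > D / ln 2 + 1\<close> and \<open>c \<ge> exp D\<close> separates the two ratios from \<open>D\<close> and \<open>1/D\<close>.\<close>

definition block_label :: "nat \<Rightarrow> nat \<Rightarrow> nat \<Rightarrow> nat" where
  "block_label M k a = (if a < M * k then Suc (a div k) else 0)"

lemma block_label_le: "block_label M k a \<le> M"
  by (auto simp: block_label_def less_mult_imp_div_less Suc_le_eq)

lemma block_label_fiber:
  assumes "0 < k" "M * k \<le> N"
  shows "{a \<in> {..<N}. block_label M k a = y} =
           (if y = 0 then {M * k..<N} else if y \<le> M then {(y - 1) * k..<y * k} else {})"
proof (cases y)
  case 0
  then show ?thesis by (auto simp: block_label_def)
next
  case (Suc j)
  have div_eq: "a div k = j \<longleftrightarrow> j * k \<le> a \<and> a < Suc j * k" for a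
    using assms(1) by (meson div_less_iff_less_mult le_less_Suc_eq
        less_eq_div_iff_mult_less_eq nat_le_linear)
  have label_eq: "block_label M k a = Suc j \<longleftrightarrow> a < M * k \<and> j * k \<le> a \<and> a < Suc j * k" for a
    unfolding block_label_def div_eq[symmetric] by simp
  show ?thesis
  proof (cases "j < M")
    case True
    then have "Suc j * k \<le> M * k"
      by (intro mult_le_mono1) simp
    with assms(2) have "{a \<in> {..<N}. block_label M k a = Suc j} = {j * k..<Suc j * k}"
      unfolding label_eq by fastforce
    then show ?thesis
      using Suc True by simp
  next
    case False
    then have "M * k \<le> j * k"
      by (intro mult_le_mono1) simp
    then have "\<not> (a < M * k \<and> j * k \<le> a)" for a
      by linarith
    then have "{a \<in> {..<N}. block_label M k a = Suc j} = {}"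
      unfolding label_eq by blast
    then show ?thesis
      using Suc False by simp
  qed
qed

lemma card_block_label_fiber:
  assumes "0 < k" "M * k \<le> N"
  shows "card {a \<in> {..<N}. block_label M k a = y} =
           (if y = 0 then N - M * k else if y \<le> M then k else 0)"
proof -
  have "y * k - (y - 1) * k = k" if "y \<noteq> 0"
    using that by (cases y) simp_all
  then show ?thesis
    unfolding block_label_fiber[OF assms] by simp
qed

definition block_program :: "nat \<Rightarrow> nat \<Rightarrow> nat \<Rightarrow> nat \<Rightarrow> nat" where
  "block_program L M N = block_label M (N div L)"

definition block_mass :: "nat \<Rightarrow> nat \<Rightarrow> real" where
  "block_mass L N = real (N div L) / real N"

lemma block_size_bounds:
  assumes "M < L" "L \<le> N"
  shows "0 < N div L" "Suc M * (N div L) \<le> N"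
proof -
  show "0 < N div L"
    using assms by (simp add: div_greater_zero_iff)
  have "Suc M * (N div L) \<le> L * (N div L)"
    using assms(1) by (intro mult_le_mono1) simp
  also have "\<dots> \<le> N"
    by simp
  finally show "Suc M * (N div L) \<le> N" .
qed

lemma block_mass_bounds:
  assumes "M < L" "L \<le> N"
  shows "0 < block_mass L N" "real (Suc M) * block_mass L N \<le> 1"
proof -
  note k = block_size_bounds[OF assms]
  have "0 < N" using assms by simp
  show "0 < block_mass L N"
    using k(1) \<open>0 < N\<close> by (simp add: block_mass_def)
  have "real (Suc M * (N div L)) \<le> real N"
    using k(2) by (simp only: of_nat_le_iff)
  then show "real (Suc M) * block_mass L N \<le> 1"
    using \<open>0 < N\<close> by (simp add: block_mass_def field_simps)
qed

lemma prog_dist_block_program: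
  assumes "M < L" "L \<le> N"
  shows "prog_dist (block_program L M) N y =
           (if y = 0 then 1 - real M * block_mass L N else if y \<le> M then block_mass L N else 0)"
proof -
  note k = block_size_bounds[OF assms]
  have "M * (N div L) \<le> N"
    using k(2) by simp
  moreover have "0 < N"
    using assms by simp
  ultimately have "real (N - M * (N div L)) / real N = 1 - real M * block_mass L N"
    by (simp add: block_mass_def field_simps)
  then show ?thesis
    unfolding prog_dist_def block_program_def card_block_label_fiber[OF k(1) \<open>M * (N div L) \<le> N\<close>]
    by (simp add: block_mass_def)
qed

lemma prog_dist_nonzero_iff_output:
  assumes "0 < N"
  shows "prog_dist F N y \<noteq> 0 \<longleftrightarrow> y \<in> prog_outputs F N"
  using assms by (auto simp: prog_dist_def prog_outputs_def card_gt_0_iff)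

lemma prog_outputs_block_program:
  assumes "M < L" "L \<le> N"
  shows "prog_outputs (block_program L M) N = {..M}"
proof -
  note mass = block_mass_bounds[OF assms]
  have "real M * block_mass L N < 1"
    using mass by (simp add: algebra_simps)
  then have "prog_dist (block_program L M) N y \<noteq> 0 \<longleftrightarrow> y \<le> M" for y
    using mass(1) by (simp add: prog_dist_block_program[OF assms])
  moreover have "0 < N"
    using assms by simp
  ultimately show ?thesis
    using prog_dist_nonzero_iff_output by blast
qed

lemma renyi_entropy_half:
  assumes "\<And>i. i \<in> S \<Longrightarrow> 0 \<le> p i"
  shows "renyi_entropy (ereal (1/2)) S p = 2 * ln (\<Sum>i\<in>S. sqrt (p i))"
proof -
  have "ereal (1/2) \<noteq> 1" "ereal (1/2) \<noteq> \<infinity>"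
    by (simp_all add: one_ereal_def)
  moreover have "(\<Sum>i\<in>S. p i powr (1/2)) = (\<Sum>i\<in>S. sqrt (p i))"
    using assms by (intro sum.cong) (simp_all add: powr_half_sqrt)
  ultimately show ?thesis
    by (simp add: renyi_entropy_def)
qed

lemma info_leak_block_program_half:
  assumes "M < L" "L \<le> N"
  shows "info_leak (ereal (1/2)) (block_program L M) N =
           2 * ln (sqrt (1 - real M * block_mass L N) + real M * sqrt (block_mass L N))"
proof -
  let ?p = "prog_dist (block_program L M) N"
  have "(\<Sum>i\<in>{..M}. sqrt (?p i)) = sqrt (?p 0) + (\<Sum>i\<in>{1..M}. sqrt (?p i))"
    by (simp add: atMost_atLeast0 sum.atLeast_Suc_atMost)
  also have "\<dots> = sqrt (1 - real M * block_mass L N) + real M * sqrt (block_mass L N)"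
    by (simp add: prog_dist_block_program[OF assms])
  finally have "(\<Sum>i\<in>{..M}. sqrt (?p i)) =
      sqrt (1 - real M * block_mass L N) + real M * sqrt (block_mass L N)" .
  moreover have "0 \<le> ?p i" for i
    by (simp add: prog_dist_def)
  ultimately show ?thesis
    unfolding info_leak_def prog_outputs_block_program[OF assms]
    by (simp add: renyi_entropy_half)
qed

lemma info_leak_block_program_infinity:
  assumes "M < L" "L \<le> N"
  shows "info_leak \<infinity> (block_program L M) N = - ln (1 - real M * block_mass L N)"
proof -
  let ?p = "prog_dist (block_program L M) N"
  have "block_mass L N \<le> 1 - real M * block_mass L N"
    using block_mass_bounds(2)[OF assms] by (simp add: algebra_simps)
  then have "Max (?p ` {..M}) = ?p 0"
    by (intro Max_eqI) (auto simp: prog_dist_block_program[OF assms])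
  moreover have "?p 0 = 1 - real M * block_mass L N"
    by (simp add: prog_dist_block_program[OF assms])
  ultimately show ?thesis
    unfolding info_leak_def renyi_entropy_def prog_outputs_block_program[OF assms] by simp
qed

lemma tendsto_block_mass:
  assumes "0 < L"
  shows "block_mass L \<longlonglongrightarrow> 1 / real L"
proof (rule tendsto_sandwich[of "\<lambda>N. 1 / real L - 1 / real N" _ _ "\<lambda>_. 1 / real L"])
  show "\<forall>\<^sub>F N in sequentially. 1 / real L - 1 / real N \<le> block_mass L N"
    using eventually_gt_at_top[of 0]
  proof eventually_elim
    case (elim N)
    have "N < L + L * (N div L)"
      using assms by (rule dividend_less_times_div)
    then have "real N < real (L + L * (N div L))"
      by (simp only: of_nat_less_iff)
    then have lower: "real N - real L \<le> real L * real (N div L)"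
      by simp
    have "1 / real L - 1 / real N = (real N - real L) / (real L * real N)"
      using elim assms by (simp add: field_simps)
    also have "\<dots> \<le> (real L * real (N div L)) / (real L * real N)"
      using lower by (intro divide_right_mono) simp_all
    also have "\<dots> = block_mass L N"
      using assms by (simp add: block_mass_def)
    finally show ?case .
  qed
  show "\<forall>\<^sub>F N in sequentially. block_mass L N \<le> 1 / real L"
  proof (rule always_eventually, intro allI)
    fix N
    have "real (N div L * L) \<le> real N"
      by (simp only: of_nat_le_iff div_times_less_eq_dividend)
    then show "block_mass L N \<le> 1 / real L"
      using assms by (simp add: block_mass_def divide_simps mult.commute)
  qed
  have "(\<lambda>N. 1 / real L - 1 / real N) \<longlonglongrightarrow> 1 / real L - 0"
    by (intro tendsto_diff tendsto_const lim_const_over_n)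
  then show "(\<lambda>N. 1 / real L - 1 / real N) \<longlonglongrightarrow> 1 / real L"
    by simp
qed (rule tendsto_const)

lemma tendsto_info_leak_block_program_infinity:
  assumes "M < L"
  shows "(\<lambda>N. info_leak \<infinity> (block_program L M) N) \<longlonglongrightarrow> - ln (1 - real M / real L)"
proof -
  have "(\<lambda>N. - ln (1 - real M * block_mass L N)) \<longlonglongrightarrow> - ln (1 - real M * (1 / real L))"
    using assms by (intro tendsto_intros tendsto_block_mass) (auto simp: field_simps)
  moreover have "\<forall>\<^sub>F N in sequentially.
      - ln (1 - real M * block_mass L N) = info_leak \<infinity> (block_program L M) N"
    using eventually_ge_at_top[of L]
    by eventually_elim (simp add: info_leak_block_program_infinity[OF assms])
  ultimately show ?thesis
    by (simp add: Lim_transform_eventually)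
qed

lemma tendsto_info_leak_block_program_half:
  assumes "M < L"
  shows "(\<lambda>N. info_leak (ereal (1/2)) (block_program L M) N) \<longlonglongrightarrow>
           2 * ln (sqrt (1 - real M / real L) + real M * sqrt (1 / real L))"
proof -
  have "0 < sqrt (1 - real M * (1 / real L))"
    using assms by (simp add: field_simps)
  then have "0 < sqrt (1 - real M * (1 / real L)) + real M * sqrt (1 / real L)"
    by (simp add: add_pos_nonneg)
  then have "(\<lambda>N. 2 * ln (sqrt (1 - real M * block_mass L N) + real M * sqrt (block_mass L N)))
      \<longlonglongrightarrow> 2 * ln (sqrt (1 - real M * (1 / real L)) + real M * sqrt (1 / real L))"
    using assms by (intro tendsto_intros tendsto_block_mass) simp_all
  moreover have "\<forall>\<^sub>F N in sequentially.
      2 * ln (sqrt (1 - real M * block_mass L N) + real M * sqrt (block_mass L N)) =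
      info_leak (ereal (1/2)) (block_program L M) N"
    using eventually_ge_at_top[of L]
    by eventually_elim (simp add: info_leak_block_program_half[OF assms])
  ultimately have "(\<lambda>N. info_leak (ereal (1/2)) (block_program L M) N) \<longlonglongrightarrow>
      2 * ln (sqrt (1 - real M * (1 / real L)) + real M * sqrt (1 / real L))"
    by (rule Lim_transform_eventually)
  then show ?thesis
    by simp
qed

lemma finite_order_block_program: "finite_order (block_program L M)"
  unfolding finite_order_def
proof (intro exI allI impI)
  fix N :: nat
  assume "0 < N"
  then have "{y. prog_dist (block_program L M) N y \<noteq> 0} \<subseteq> {..M}"
    by (auto simp: prog_dist_nonzero_iff_output prog_outputs_def block_program_def block_label_le)
  then show "dist_support_size (block_program L M) N \<le> Suc M"
    unfolding dist_support_size_def by (metis card_atMost card_mono finite_atMost)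
qed

lemma neg_ln_one_minus_le:
  fixes r :: real
  assumes "0 \<le> r" "r < 1"
  shows "- ln (1 - r) \<le> r / (1 - r)"
proof -
  have "- ln (1 - r) = ln (1 / (1 - r))"
    using assms by (simp add: ln_div)
  also have "\<dots> \<le> 1 / (1 - r) - 1"
    using assms by (intro ln_le_minus_one) simp
  also have "\<dots> = r / (1 - r)"
    using assms by (simp add: field_simps)
  finally show ?thesis .
qed

lemma skewed_block_parameters:
  fixes D :: real
  assumes "1 < D"
  obtains M L :: nat where "0 < M" "M < L"
    "0 < - ln (1 - real M / real L)" "D < ln 2 / - ln (1 - real M / real L)"
    "0 < 2 * ln (sqrt (1 - real M / real L) + real M * sqrt (1 / real L))"
    "ln 2 / (2 * ln (sqrt (1 - real M / real L) + real M * sqrt (1 / real L))) < 1 / D"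
proof -
  obtain n :: nat where n: "D / ln 2 + 1 < real n"
    using reals_Archimedean2 by blast
  obtain c :: nat where c: "exp D \<le> real c"
    using real_arch_simple by blast
  have "0 < D / ln 2"
    using assms by simp
  then have "1 < real n"
    using n by linarith
  have "0 < c"
    using c exp_gt_zero[of D] by linarith
  define M L where "M = n * c" and "L = n * M"
  have ratio: "real M / real L = 1 / real n"
    using \<open>0 < c\<close> \<open>1 < real n\<close> by (simp add: M_def L_def)
  have "real M * sqrt (1 / real L) = sqrt (real M * real M * (1 / real L))"
    by (simp only: real_sqrt_mult real_sqrt_mult_self abs_of_nat)
  also have "\<dots> = sqrt (real c)"
    using \<open>0 < c\<close> \<open>1 < real n\<close> by (simp add: M_def L_def)
  finally have mass: "real M * sqrt (1 / real L) = sqrt (real c)" .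
  have "- ln (1 - 1 / real n) \<le> (1 / real n) / (1 - 1 / real n)"
    using \<open>1 < real n\<close> by (intro neg_ln_one_minus_le) simp_all
  also have "\<dots> = 1 / (real n - 1)"
    using \<open>1 < real n\<close> by (simp add: field_simps)
  finally have "D * - ln (1 - 1 / real n) \<le> D * (1 / (real n - 1))"
    using assms by (intro mult_left_mono) simp_all
  also have "\<dots> < ln 2"
    using n \<open>1 < real n\<close> assms by (simp add: field_simps)
  finally have "D * - ln (1 - 1 / real n) < ln 2" .
  moreover have infinity_pos: "0 < - ln (1 - 1 / real n)"
    using \<open>1 < real n\<close> by (simp add: field_simps)
  ultimately have infinity: "D < ln 2 / - ln (1 - 1 / real n)"
    by (simp only: pos_less_divide_eq)
  have "0 < D * ln 2"
    using assms by simp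
  have "D * ln 2 < D"
    using assms ln_2_less_1 by simp
  also have "\<dots> = ln (exp D)"
    by simp
  also have "\<dots> \<le> ln (real c)"
    using c by (intro ln_mono) simp_all
  also have "\<dots> = 2 * ln (sqrt (real c))"
    using \<open>0 < c\<close> by (simp add: ln_sqrt)
  also have "\<dots> \<le> 2 * ln (sqrt (1 - 1 / real n) + sqrt (real c))"
    using \<open>0 < c\<close> \<open>1 < real n\<close> by (intro mult_left_mono ln_mono) simp_all
  finally have half_bound: "D * ln 2 < 2 * ln (sqrt (1 - 1 / real n) + sqrt (real c))" .
  then have half_pos: "0 < 2 * ln (sqrt (1 - 1 / real n) + sqrt (real c))"
    using \<open>0 < D * ln 2\<close> by linarith
  with half_bound have half: "ln 2 / (2 * ln (sqrt (1 - 1 / real n) + sqrt (real c))) < 1 / D"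
    using assms by (simp add: field_simps)
  show ?thesis
  proof
    show "0 < M" "M < L"
      using \<open>0 < c\<close> \<open>1 < real n\<close> by (simp_all add: M_def L_def)
  qed (use infinity_pos infinity half_pos half in \<open>simp_all add: ratio mass\<close>)
qed

lemma tendsto_info_leak_block_program_2_1:
  shows "(\<lambda>N. info_leak \<infinity> (block_program 2 1) N) \<longlonglongrightarrow> ln 2"
    and "(\<lambda>N. info_leak (ereal (1/2)) (block_program 2 1) N) \<longlonglongrightarrow> ln 2"
proof -
  show "(\<lambda>N. info_leak \<infinity> (block_program 2 1) N) \<longlonglongrightarrow> ln 2"
    using tendsto_info_leak_block_program_infinity[of 1 2] by (simp add: ln_div)
  have "sqrt (1/2) + sqrt (1/2) = 2 * sqrt (1/2 :: real)"
    by simp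
  also have "\<dots> = sqrt 2"
    by (simp add: real_sqrt_divide real_div_sqrt)
  finally have "2 * ln (sqrt (1/2) + sqrt (1/2)) = (ln 2 :: real)"
    by (simp add: ln_sqrt)
  then show "(\<lambda>N. info_leak (ereal (1/2)) (block_program 2 1) N) \<longlonglongrightarrow> ln 2"
    using tendsto_info_leak_block_program_half[of 1 2] by simp
qed

theorem lemma3:
  fixes D :: real
  assumes "D > 1"
  shows "\<exists>\<alpha> \<beta> :: ereal. 0 < \<alpha> \<and> 0 < \<beta> \<and> \<alpha> \<noteq> \<beta> \<and>
           (\<exists>C1 C2 :: nat \<Rightarrow> nat \<Rightarrow> nat. finite_order C1 \<and> finite_order C2 \<and>
              (\<exists>L1. ((\<lambda>N. info_leak \<alpha> C1 N / info_leak \<alpha> C2 N) \<longlongrightarrow> L1) sequentially \<and> L1 > D) \<and>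
              (\<exists>L2. ((\<lambda>N. info_leak \<beta> C1 N / info_leak \<beta> C2 N) \<longlongrightarrow> L2) sequentially \<and> L2 < 1 / D))"
proof -
  obtain M L :: nat where "0 < M" "M < L"
    and "0 < - ln (1 - real M / real L)" "D < ln 2 / - ln (1 - real M / real L)"
    and "0 < 2 * ln (sqrt (1 - real M / real L) + real M * sqrt (1 / real L))"
    and "ln 2 / (2 * ln (sqrt (1 - real M / real L) + real M * sqrt (1 / real L))) < 1 / D"
    using skewed_block_parameters[OF assms] by blast
  moreover have "(\<lambda>N. info_leak \<infinity> (block_program 2 1) N / info_leak \<infinity> (block_program L M) N)
      \<longlonglongrightarrow> ln 2 / - ln (1 - real M / real L)"
    using calculation
    by (intro tendsto_divide tendsto_info_leak_block_program_2_1(1)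
        tendsto_info_leak_block_program_infinity) simp_all
  moreover have "(\<lambda>N. info_leak (ereal (1/2)) (block_program 2 1) N /
      info_leak (ereal (1/2)) (block_program L M) N)
      \<longlonglongrightarrow> ln 2 / (2 * ln (sqrt (1 - real M / real L) + real M * sqrt (1 / real L)))"
    using calculation
    by (intro tendsto_divide tendsto_info_leak_block_program_2_1(2)
        tendsto_info_leak_block_program_half) simp_all
  ultimately show ?thesis
    using finite_order_block_program
    by (intro exI[of _ \<infinity>] exI[of _ "ereal (1/2)"]) auto
qed

end
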